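(* Let $F$ be a finite group of order $n$. There is an embedding of $F$ into the alternating group $\mathrm{Alt}(2n+3)$ such that $\mathrm{Alt}(2n+3)$ is generated by the $F$-conjugates of $\mathrm{Alt}(5)$.
   Context: $\mathrm{Alt}(m)$ is the alternating group on $\{1,\dots,m\}$; for $k<m$, $\mathrm{Alt}(k)$ is identified with the subgroup of $\mathrm{Alt}(m)$ consisting of even permutations of $\{1,\dots,k\}$ (fixing all points greater than $k$). *)

theory Defs
  imports "HOL-Algebra.Sym_Groups" "HOL-Algebra.Generated_Groups"
begin

end

theory Submission
  imports Defs
begin

text \<open>Enumerate \<open>F\<close> as \<open>elem 0, \<dots>, elem (n - 1)\<close> and let \<open>f\<close> act by left multiplication on two
  copies \<open>{4, 6, \<dots>}\<close> and \<open>{5, 7, \<dots>}\<close> of \<open>F\<close>, fixing \<open>1, 2, 3\<close>. The action on the second copy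
  is a conjugate of the action on the first, so the product is even. If \<open>f \<otimes> elem 0 = elem j\<close>,
  conjugation by \<open>f\<close> carries \<open>Alt {1..5}\<close> to \<open>Alt {1, 2, 3, 4 + 2 j, 5 + 2 j}\<close>; hence the
  conjugates contain every 3-cycle \<open>(1 2 c)\<close>, and these generate the alternating group.\<close>

lemma cycle_of_list_three:
  assumes "distinct [a, b, c]"
  shows "cycle_of_list [a, b, c] = (\<lambda>x. if x = a then b else if x = b then c else if x = c then a else x)"
  using assms by (intro ext) (auto simp: transpose_def)

lemma cycle_of_list_three_rotate:
  assumes "distinct [a, b, c]"
  shows "cycle_of_list [a, b, c] = cycle_of_list [b, c, a]"
    and "cycle_of_list [a, b, c] = cycle_of_list [c, a, b]"
  using cycle_of_list_rotate_independent[OF assms, of 1]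
    cycle_of_list_rotate_independent[OF assms, of 2]
  by (simp_all add: numeral_2_eq_2 del: cycle_of_list.simps)

lemma alt_group_conj_cycle_mem:
  assumes H: "subgroup H (alt_group m)" and p: "p \<in> H"
    and cs: "cycle cs" "cycle_of_list cs \<in> H"
  shows "cycle_of_list (map p cs) \<in> H"
proof -
  have "p \<in> carrier (alt_group m)" using subgroup.subset[OF H] p by blast
  then have "bij p" and inv: "inv\<^bsub>alt_group m\<^esub> p = inv' p"
    using alt_group_carrier' permutation_bijective alt_group_inv_equality by blast+
  have "p \<otimes>\<^bsub>alt_group m\<^esub> cycle_of_list cs \<otimes>\<^bsub>alt_group m\<^esub> inv\<^bsub>alt_group m\<^esub> p \<in> H"
    using H p cs(2) by (intro subgroup.m_closed subgroup.m_inv_closed) auto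
  then show ?thesis
    by (simp add: inv alt_group_mult conjugation_of_cycle[OF cs(1) \<open>bij p\<close>])
qed

context
  fixes m :: nat and H :: "(nat \<Rightarrow> nat) set"
  assumes subgroup_H: "subgroup H (alt_group m)"
    and cycle_1_2_mem: "\<And>c. c \<in> {3..m} \<Longrightarrow> cycle_of_list [1, 2, c] \<in> H"
begin

lemma three_cycle_mem_two_in_1_2:
  assumes xy: "{x, y} = {1, 2}" and c: "c \<in> {3..m}"
  shows "cycle_of_list [x, y, c] \<in> H"
proof -
  have gen: "cycle_of_list [1, 2, c] \<in> H" using cycle_1_2_mem[OF c] .
  have "distinct [1, 2, c]" "distinct [2, 1, c]" using c by auto
  then have "cycle_of_list [2, 1, c] = cycle_of_list [1, 2, c] \<circ> cycle_of_list [1, 2, c]"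
    by (simp only: cycle_of_list_three) (auto simp: fun_eq_iff)
  then have "cycle_of_list [2, 1, c] \<in> H"
    using subgroup.m_closed[OF subgroup_H gen gen] by (simp add: alt_group_mult)
  with gen xy show ?thesis by (auto simp: doubleton_eq_iff)
qed

lemma three_cycle_mem_one_in_1_2:
  assumes x: "x \<in> {1, 2}" and uv: "u \<in> {3..m}" "v \<in> {3..m}" "u \<noteq> v"
  shows "cycle_of_list [x, u, v] \<in> H"
proof -
  define y :: nat where "y = 3 - x"
  have "{y, x} = {1, 2}" using x unfolding y_def by auto
  then have "cycle_of_list [y, x, u] \<in> H" "cycle_of_list [y, x, v] \<in> H"
    using three_cycle_mem_two_in_1_2 uv by auto
  moreover have "map (cycle_of_list [y, x, u]) [y, x, v] = [x, u, v]"
    using x uv unfolding y_def by (auto simp: cycle_of_list_three)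
  ultimately show ?thesis
    using alt_group_conj_cycle_mem[OF subgroup_H, of "cycle_of_list [y, x, u]" "[y, x, v]"] x uv
    unfolding y_def by auto
qed

lemma three_cycle_mem_none_in_1_2:
  assumes abc: "a \<in> {3..m}" "b \<in> {3..m}" "c \<in> {3..m}" "distinct [a, b, c]"
  shows "cycle_of_list [a, b, c] \<in> H"
proof -
  have "cycle_of_list [1, 2, a] \<in> H" "cycle_of_list [2, b, c] \<in> H"
    using cycle_1_2_mem three_cycle_mem_one_in_1_2 abc by auto
  moreover have "map (cycle_of_list [1, 2, a]) [2, b, c] = [a, b, c]"
    using abc by (auto simp: cycle_of_list_three)
  ultimately show ?thesis
    using alt_group_conj_cycle_mem[OF subgroup_H, of "cycle_of_list [1, 2, a]" "[2, b, c]"] abc by auto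
qed

lemma three_cycle_mem_head_in_1_2:
  assumes a: "a \<in> {1, 2}" and bc: "{b, c} \<subseteq> {1..m}" and abc: "distinct [a, b, c]"
  shows "cycle_of_list [a, b, c] \<in> H"
proof -
  consider "b \<in> {1, 2}" | "c \<in> {1, 2}" | "b \<in> {3..m}" "c \<in> {3..m}"
    using bc by fastforce
  then show ?thesis
  proof cases
    case 1
    then have "{a, b} = {1, 2}" "c \<in> {3..m}" using a bc abc by auto
    then show ?thesis by (rule three_cycle_mem_two_in_1_2)
  next
    case 2
    then have "{c, a} = {1, 2}" "b \<in> {3..m}" using a bc abc by auto
    then have "cycle_of_list [c, a, b] \<in> H" by (rule three_cycle_mem_two_in_1_2)
    then show ?thesis by (simp only: cycle_of_list_three_rotate(2)[OF abc])
  next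
    case 3
    then show ?thesis using three_cycle_mem_one_in_1_2 a abc by auto
  qed
qed

lemma three_cycles_subset: "three_cycles m \<subseteq> H"
proof
  fix p assume "p \<in> three_cycles m"
  then obtain cs where cs: "p = cycle_of_list cs" "distinct cs" "length cs = 3" "set cs \<subseteq> {1..m}"
    by blast
  then obtain a b c where "cs = [a, b, c]" using stupid_lemma by blast
  then have p: "p = cycle_of_list [a, b, c]" and abc: "distinct [a, b, c]"
    and range: "{a, b, c} \<subseteq> {1..m}"
    using cs by auto
  note rotations = cycle_of_list_three_rotate[OF abc, folded p]
  consider "a \<in> {1, 2}" | "b \<in> {1, 2}" | "c \<in> {1, 2}" | "{a, b, c} \<subseteq> {3..m}"
    using range by fastforce
  then show "p \<in> H"
  proof cases
    case 1
    then show ?thesis using three_cycle_mem_head_in_1_2[of a b c] abc range p by simp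
  next
    case 2
    then show ?thesis using three_cycle_mem_head_in_1_2[of b c a] abc range rotations(1) by simp
  next
    case 3
    then show ?thesis using three_cycle_mem_head_in_1_2[of c a b] abc range rotations(2) by simp
  next
    case 4
    then show ?thesis using three_cycle_mem_none_in_1_2[of a b c] abc p by simp
  qed
qed

end

lemma alt_group_generated_by_three_cycles_through_1_2:
  "generate (alt_group m) ((\<lambda>c. cycle_of_list [1, 2, c]) ` {3..m}) = carrier (alt_group m)"
    (is "generate _ ?gens = _")
proof -
  interpret A: group "alt_group m" by (rule alt_group_is_group)
  have "?gens \<subseteq> three_cycles m"
  proof (rule image_subsetI)
    fix c :: nat assume "c \<in> {3..m}"
    then show "cycle_of_list [1, 2, c] \<in> three_cycles m"
      by (intro CollectI exI[of _ "[1, 2, c]"]) auto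
  qed
  then have gens: "?gens \<subseteq> carrier (alt_group m)"
    using three_cycles_incl by blast
  then have subgroup: "subgroup (generate (alt_group m) ?gens) (alt_group m)"
    by (rule A.generate_is_subgroup)
  have "three_cycles m \<subseteq> generate (alt_group m) ?gens"
    using subgroup by (rule three_cycles_subset) (auto intro: generate.incl)
  then have "carrier (alt_group m) \<subseteq> generate (alt_group m) ?gens"
    using A.generate_subgroup_incl[OF _ subgroup] alt_group_carrier_as_three_cycles by blast
  then show ?thesis using A.generate_incl[OF gens] by blast
qed

lemma alt_group_carrier_mono:
  "m \<le> k \<Longrightarrow> carrier (alt_group m) \<subseteq> carrier (alt_group k)"
  by (auto simp: alt_group_carrier elim!: permutes_subset)

lemma evenperm_comp_conjugate:
  assumes "permutation p" and "permutation t"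
  shows "evenperm (p \<circ> (t \<circ> p \<circ> inv' t))"
  using assms by (auto simp: evenperm_comp evenperm_inv permutation_compose permutation_inverse)

locale enumerated_group = group F for F (structure) +
  fixes n :: nat and elem :: "nat \<Rightarrow> 'a"
  assumes elem_bij: "bij_betw elem {..<n} (carrier F)"
begin

definition index :: "'a \<Rightarrow> nat" where
  "index g = the_inv_into {..<n} elem g"

lemma index_less: "g \<in> carrier F \<Longrightarrow> index g < n"
  unfolding index_def using elem_bij
  by (metis bij_betw_def lessThan_iff the_inv_into_into subset_refl)

lemma elem_index: "g \<in> carrier F \<Longrightarrow> elem (index g) = g"
  unfolding index_def using elem_bij by (metis bij_betw_def f_the_inv_into_f)

lemma index_elem: "i < n \<Longrightarrow> index (elem i) = i"
  unfolding index_def using elem_bij by (simp add: bij_betw_def the_inv_into_f_f)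

lemma elem_closed: "i < n \<Longrightarrow> elem i \<in> carrier F"
  using elem_bij by (auto simp: bij_betw_def)

lemma order_pos: "0 < n"
  using index_less[OF one_closed] by simp

text \<open>The points \<open>4 + 2 * i\<close> and \<open>5 + 2 * i\<close> (\<open>i < n\<close>) stand for \<open>elem i\<close> in copy \<open>0\<close> and
  copy \<open>1\<close> of the left regular representation; \<open>reg_perm R f\<close> lets \<open>f\<close> act on the copies
  in \<open>R\<close> and fixes all other points.\<close>

definition reg_perm :: "nat set \<Rightarrow> 'a \<Rightarrow> nat \<Rightarrow> nat" where
  "reg_perm R f x =
    (if 4 \<le> x \<and> x < 2 * n + 4 \<and> (x - 4) mod 2 \<in> R
     then 4 + 2 * index (f \<otimes> elem ((x - 4) div 2)) + (x - 4) mod 2 else x)"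

lemma point_cases:
  assumes "4 \<le> x" "x < 2 * n + 4"
  obtains (copy_0) i where "i < n" "x = 4 + 2 * i"
    | (copy_1) i where "i < n" "x = 5 + 2 * i"
proof (cases "even x")
  case True
  then have "x = 4 + 2 * ((x - 4) div 2)" using assms(1) by presburger
  then show ?thesis using copy_0 assms(2) by auto
next
  case False
  then have "x = 5 + 2 * ((x - 4) div 2)" using assms(1) by presburger
  then show ?thesis using copy_1 assms(2) by auto
qed

lemma points_ext:
  assumes "\<And>x. \<not> (4 \<le> x \<and> x < 2 * n + 4) \<Longrightarrow> p x = q x"
    and "\<And>i. i < n \<Longrightarrow> p (4 + 2 * i) = q (4 + 2 * i)"
    and "\<And>i. i < n \<Longrightarrow> p (5 + 2 * i) = q (5 + 2 * i)"
  shows "p = q"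
proof
  fix x
  show "p x = q x"
    by (cases "4 \<le> x \<and> x < 2 * n + 4") (auto elim: point_cases intro: assms)
qed

lemma reg_perm_point:
  "i < n \<Longrightarrow> reg_perm R f (4 + 2 * i) = (if 0 \<in> R then 4 + 2 * index (f \<otimes> elem i) else 4 + 2 * i)"
  "i < n \<Longrightarrow> reg_perm R f (5 + 2 * i) = (if 1 \<in> R then 5 + 2 * index (f \<otimes> elem i) else 5 + 2 * i)"
  unfolding reg_perm_def by auto

lemma reg_perm_outside: "\<not> (4 \<le> x \<and> x < 2 * n + 4) \<Longrightarrow> reg_perm R f x = x"
  unfolding reg_perm_def by auto

lemma reg_perm_mult:
  assumes "f \<in> carrier F" and "g \<in> carrier F"
  shows "reg_perm R (f \<otimes> g) = reg_perm R f \<circ> reg_perm R g"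
  using assms
  by (intro points_ext) (simp_all add: reg_perm_point reg_perm_outside index_less elem_index elem_closed m_assoc)

lemma reg_perm_one: "reg_perm R \<one> = id"
  by (intro points_ext) (simp_all add: reg_perm_point reg_perm_outside elem_closed index_elem)

lemma reg_perm_permutes:
  assumes "f \<in> carrier F"
  shows "reg_perm R f permutes {4..<2 * n + 4}"
proof -
  have "reg_perm R f \<circ> reg_perm R (inv f) = id" "reg_perm R (inv f) \<circ> reg_perm R f = id"
    using assms by (simp_all flip: reg_perm_mult add: reg_perm_one)
  then have "bij (reg_perm R f)" by (metis o_bij)
  then show ?thesis unfolding permutes_def bij_iff by (auto simp: reg_perm_outside)
qed

lemma reg_perm_both_copies:
  assumes "f \<in> carrier F"
  shows "reg_perm {0, 1} f = reg_perm {0} f \<circ> reg_perm {1} f"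
  using assms by (intro points_ext) (simp_all add: reg_perm_point reg_perm_outside index_less elem_closed)

definition swap_copies :: "nat \<Rightarrow> nat" where
  "swap_copies x = (if 4 \<le> x \<and> x < 2 * n + 4 then if even x then x + 1 else x - 1 else x)"

lemma swap_copies_point:
  "i < n \<Longrightarrow> swap_copies (4 + 2 * i) = 5 + 2 * i"
  "i < n \<Longrightarrow> swap_copies (5 + 2 * i) = 4 + 2 * i"
  unfolding swap_copies_def by auto

lemma swap_copies_outside: "\<not> (4 \<le> x \<and> x < 2 * n + 4) \<Longrightarrow> swap_copies x = x"
  unfolding swap_copies_def by auto

lemma swap_copies_involution: "swap_copies \<circ> swap_copies = id"
  by (intro points_ext) (simp_all add: swap_copies_point swap_copies_outside)

lemma permutation_swap_copies: "permutation swap_copies"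
proof -
  have "bij swap_copies" using swap_copies_involution by (metis o_bij)
  then have "swap_copies permutes {4..<2 * n + 4}"
    unfolding permutes_def bij_iff by (auto simp: swap_copies_outside)
  then show ?thesis using permutation_permutes by blast
qed

lemma reg_perm_copy_1:
  assumes "f \<in> carrier F"
  shows "reg_perm {1} f = swap_copies \<circ> reg_perm {0} f \<circ> swap_copies"
  using assms
  by (intro points_ext)
    (simp_all add: reg_perm_point reg_perm_outside swap_copies_point swap_copies_outside index_less elem_closed)

abbreviation reg_embedding :: "'a \<Rightarrow> nat \<Rightarrow> nat" where
  "reg_embedding \<equiv> reg_perm {0, 1}"

lemma evenperm_reg_embedding:
  assumes "f \<in> carrier F"
  shows "evenperm (reg_embedding f)"
proof -
  have "inv' swap_copies = swap_copies"
    using swap_copies_involution by (intro inv_unique_comp)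
  then have "reg_embedding f = reg_perm {0} f \<circ> (swap_copies \<circ> reg_perm {0} f \<circ> inv' swap_copies)"
    by (simp only: reg_perm_both_copies[OF assms] reg_perm_copy_1[OF assms])
  moreover have "permutation (reg_perm {0} f)"
    using reg_perm_permutes[OF assms] permutation_permutes by blast
  ultimately show ?thesis
    using evenperm_comp_conjugate permutation_swap_copies by simp
qed

lemma reg_embedding_in_alt_group:
  assumes "f \<in> carrier F"
  shows "reg_embedding f \<in> carrier (alt_group (2 * n + 3))"
proof -
  have "reg_embedding f permutes {1..2 * n + 3}"
    using reg_perm_permutes[OF assms] by (rule permutes_subset) auto
  then show ?thesis using evenperm_reg_embedding[OF assms] by (simp add: alt_group_carrier)
qed

lemma reg_embedding_hom: "reg_embedding \<in> hom F (alt_group (2 * n + 3))"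
  by (intro homI reg_embedding_in_alt_group) (simp_all add: reg_perm_mult alt_group_mult)

lemma reg_embedding_first_points:
  "reg_embedding f 4 = 4 + 2 * index (f \<otimes> elem 0)"
  "reg_embedding f 5 = 5 + 2 * index (f \<otimes> elem 0)"
  using reg_perm_point[OF order_pos] by simp_all

lemma inj_on_reg_embedding: "inj_on reg_embedding (carrier F)"
proof (rule inj_onI)
  fix f g assume f: "f \<in> carrier F" and g: "g \<in> carrier F" and eq: "reg_embedding f = reg_embedding g"
  have "index (f \<otimes> elem 0) = index (g \<otimes> elem 0)"
    using reg_embedding_first_points(1)[of f] reg_embedding_first_points(1)[of g] eq by simp
  then have "f \<otimes> elem 0 = g \<otimes> elem 0"
    using f g order_pos by (metis elem_closed elem_index m_closed)
  then show "f = g" using f g order_pos elem_closed by simp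
qed

definition alt5_conjugates :: "(nat \<Rightarrow> nat) set" where
  "alt5_conjugates =
    (\<Union>f \<in> carrier F. (\<lambda>\<sigma>. reg_embedding f \<otimes>\<^bsub>alt_group (2 * n + 3)\<^esub> \<sigma>
        \<otimes>\<^bsub>alt_group (2 * n + 3)\<^esub> inv\<^bsub>alt_group (2 * n + 3)\<^esub> (reg_embedding f))
      ` carrier (alt_group 5))"

lemma alt5_conjugates_subset: "alt5_conjugates \<subseteq> carrier (alt_group (2 * n + 3))"
proof -
  interpret A: group "alt_group (2 * n + 3)" by (rule alt_group_is_group)
  have "carrier (alt_group 5) \<subseteq> carrier (alt_group (2 * n + 3))"
    using order_pos by (intro alt_group_carrier_mono) simp
  then show ?thesis
    unfolding alt5_conjugates_def using reg_embedding_in_alt_group by blast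
qed

lemma three_cycle_1_2_in_alt5_conjugates:
  assumes c: "c \<in> {3..2 * n + 3}"
  shows "cycle_of_list [1, 2, c] \<in> alt5_conjugates"
proof -
  obtain f d where f: "f \<in> carrier F" and d: "d \<in> {3..5}" and fd: "reg_embedding f d = c"
  proof (cases "c = 3")
    case True
    then show ?thesis using that[of \<one> 3] by (simp add: reg_perm_one)
  next
    case False
    then have "4 \<le> c" "c < 2 * n + 4" using c by auto
    then obtain j where j: "j < n" and "c = 4 + 2 * j \<or> c = 5 + 2 * j"
      by (elim point_cases) auto
    moreover define f where "f = elem j \<otimes> inv (elem 0)"
    moreover have "f \<in> carrier F" "f \<otimes> elem 0 = elem j"
      unfolding f_def using j order_pos by (simp_all add: elem_closed m_assoc)
    ultimately show ?thesis
      using that[of f 4] that[of f 5] reg_embedding_first_points[of f] by (auto simp: index_elem)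
  qed
  have emb: "reg_embedding f \<in> carrier (alt_group (2 * n + 3))"
    using reg_embedding_in_alt_group[OF f] .
  then have "bij (reg_embedding f)"
    using alt_group_carrier' permutation_bijective by blast
  have "reg_embedding f 1 = 1" "reg_embedding f 2 = 2"
    by (simp_all add: reg_perm_outside)
  then have "reg_embedding f \<circ> cycle_of_list [1, 2, d] \<circ> inv' (reg_embedding f) = cycle_of_list [1, 2, c]"
    using fd d conjugation_of_cycle[OF _ \<open>bij (reg_embedding f)\<close>, of "[1, 2, d]"] by simp
  then have conj: "cycle_of_list [1, 2, c] =
      reg_embedding f \<otimes>\<^bsub>alt_group (2 * n + 3)\<^esub> cycle_of_list [1, 2, d]
        \<otimes>\<^bsub>alt_group (2 * n + 3)\<^esub> inv\<^bsub>alt_group (2 * n + 3)\<^esub> (reg_embedding f)"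
    by (simp only: alt_group_mult alt_group_inv_equality[OF emb])
  have "cycle_of_list [1, 2, d] \<in> carrier (alt_group 5)"
    using d three_cycles_incl[of 5] by (force intro!: exI[of _ "[1, 2, d]"])
  then show ?thesis
    unfolding alt5_conjugates_def using f conj by blast
qed

lemma generate_alt5_conjugates:
  "generate (alt_group (2 * n + 3)) alt5_conjugates = carrier (alt_group (2 * n + 3))"
proof -
  interpret A: group "alt_group (2 * n + 3)" by (rule alt_group_is_group)
  have "(\<lambda>c. cycle_of_list [1, 2, c]) ` {3..2 * n + 3} \<subseteq> generate (alt_group (2 * n + 3)) alt5_conjugates"
    using three_cycle_1_2_in_alt5_conjugates by (auto intro: generate.incl)
  then have "carrier (alt_group (2 * n + 3)) \<subseteq> generate (alt_group (2 * n + 3)) alt5_conjugates"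
    using A.generate_subgroup_incl A.generate_is_subgroup[OF alt5_conjugates_subset]
    by (metis alt_group_generated_by_three_cycles_through_1_2)
  then show ?thesis using A.generate_incl[OF alt5_conjugates_subset] by blast
qed

end

theorem lemma3p2:
  fixes F :: "('a, 'b) monoid_scheme" and n :: nat
  assumes "group F" and "finite (carrier F)" and "order F = n"
  shows "\<exists>\<phi>. \<phi> \<in> hom F (alt_group (2 * n + 3)) \<and> inj_on \<phi> (carrier F) \<and>
           generate (alt_group (2 * n + 3))
             (\<Union>f \<in> carrier F. (\<lambda>\<sigma>. \<phi> f \<otimes>\<^bsub>alt_group (2 * n + 3)\<^esub> \<sigma>
                  \<otimes>\<^bsub>alt_group (2 * n + 3)\<^esub> inv\<^bsub>alt_group (2 * n + 3)\<^esub> (\<phi> f))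
                ` carrier (alt_group 5))
           = carrier (alt_group (2 * n + 3))"
proof -
  obtain elem where "bij_betw elem {..<n} (carrier F)"
    using ex_bij_betw_nat_finite[OF assms(2)] assms(3)
    unfolding order_def by (auto simp: atLeast0LessThan)
  then interpret enumerated_group F n elem
    using assms(1) by (intro enumerated_group.intro enumerated_group_axioms.intro)
  show ?thesis
    using reg_embedding_hom inj_on_reg_embedding generate_alt5_conjugates
    unfolding alt5_conjugates_def by blast
qed

end
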